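(* Let $n=n^{(p)}$ with $n/p\to\delta\in(0,\infty)$, let $\boldsymbol{g}\sim\mathcal{N}(\mathbf 0,\boldsymbol I_n)$ and $\boldsymbol{h}\sim\mathcal{N}(\mathbf 0,\boldsymbol I_p)$, and let $\{\boldsymbol w^{(p)}\}$, $\boldsymbol w^{(p)}\in\mathbb{R}^n$, be a converging sequence with $\frac1n\|\boldsymbol w\|^2\to\sigma_w^2$. Let $\boldsymbol\beta\in\mathbb{R}^p$ and $0\le\lambda_1\le\cdots\le\lambda_p$, $J_{\boldsymbol\lambda}(\boldsymbol x)=\sum_i\lambda_i|x|_{(i)}$. For $\boldsymbol v\in\mathbb{R}^p$ define \[ L(\boldsymbol v)=\frac12\Big(\sqrt{\tfrac{\|\boldsymbol v\|^2}{n}\tfrac{\|\boldsymbol g\|^2}{n}+\tfrac{\|\boldsymbol w\|^2}{n}+2\tfrac{\|\boldsymbol v\|}{\sqrt n}\tfrac{\boldsymbol g^\top\boldsymbol w}{n}}-\tfrac{\boldsymbol h^\top\boldsymbol v}{n}\Big)_+^2+\frac{J_{\boldsymbol\lambda}(\boldsymbol v+\boldsymbol\beta)}{n}, \] \[ \widetilde L(\boldsymbol v)=\frac12\Big(\sqrt{\tfrac{\|\boldsymbol v\|^2}{n}+\sigma_w^2}-\tfrac{\boldsymbol h^\top\boldsymbol v}{n}\Big)_+^2+\frac{J_{\boldsymbol\lambda}(\boldsymbol v+\boldsymbol\beta)}{n}, \] and for $K>0$ let $\mathcal S_{\boldsymbol v}(K)=\{\boldsymbol v:\|\boldsymbol v\|_2/\sqrt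 n\le K\}$. Then for every $\epsilon\in(0,1/2)$, \[ \sup_{\boldsymbol v\in\mathcal S_{\boldsymbol v}(K)}|L(\boldsymbol v)-\widetilde L(\boldsymbol v)|<c\epsilon \] with probability $1-\delta^{(p)}$, where $\delta^{(p)}\to0$ as $p\to\infty$ and $c>0$ is a constant not depending on $p$.
   Context: $(x)_+=\max\{0,x\}$. $|x|_{(1)}\le\cdots\le|x|_{(p)}$ denotes the increasing rearrangement of the absolute values of the entries of $\boldsymbol x$. A converging sequence is a sequence of vectors whose empirical measure converges weakly to a probability measure. *)

theory Defs
  imports "HOL-Probability.Probability"
begin

text \<open>Vectors of R^m are represented as functions nat => real, only indices i < m matter.\<close>

definition vnorm :: "nat \<Rightarrow> (nat \<Rightarrow> real) \<Rightarrow> real" where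
  "vnorm m v = sqrt (\<Sum>i<m. (v i)^2)"

definition vinner :: "nat \<Rightarrow> (nat \<Rightarrow> real) \<Rightarrow> (nat \<Rightarrow> real) \<Rightarrow> real" where
  "vinner m u v = (\<Sum>i<m. u i * v i)"

definition pos_part :: "real \<Rightarrow> real" where
  "pos_part x = max 0 x"

text \<open>Increasing rearrangement of the absolute values of the entries of x in R^m
  (0-based: entry k is |x|_(k+1)).\<close>
definition sorted_abs :: "nat \<Rightarrow> (nat \<Rightarrow> real) \<Rightarrow> real list" where
  "sorted_abs m x = sort (map (\<lambda>i. \<bar>x i\<bar>) [0..<m])"

definition J_lam :: "nat \<Rightarrow> (nat \<Rightarrow> real) \<Rightarrow> (nat \<Rightarrow> real) \<Rightarrow> real" where
  "J_lam m lam x = (\<Sum>i<m. lam i * (sorted_abs m x ! i))"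

definition empirical_measure :: "nat \<Rightarrow> (nat \<Rightarrow> real) \<Rightarrow> real measure" where
  "empirical_measure m w = distr (uniform_count_measure {..<m}) borel w"

definition converging_sequence :: "(nat \<Rightarrow> nat) \<Rightarrow> (nat \<Rightarrow> nat \<Rightarrow> real) \<Rightarrow> bool" where
  "converging_sequence n w \<longleftrightarrow>
     (\<exists>\<mu>. prob_space \<mu> \<and> sets \<mu> = sets borel \<and>
          weak_conv_m (\<lambda>p. empirical_measure (n p) (w p)) \<mu>)"

definition std_gaussian_vector :: "'a measure \<Rightarrow> nat \<Rightarrow> ('a \<Rightarrow> nat \<Rightarrow> real) \<Rightarrow> bool" where
  "std_gaussian_vector M m X \<longleftrightarrow>
     (\<forall>i<m. distributed M lborel (\<lambda>\<omega>. X \<omega> i) std_normal_density) \<and>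
     prob_space.indep_vars M (\<lambda>_. borel) (\<lambda>i \<omega>. X \<omega> i) {..<m}"

definition L_fun :: "nat \<Rightarrow> nat \<Rightarrow> (nat \<Rightarrow> real) \<Rightarrow> (nat \<Rightarrow> real) \<Rightarrow> (nat \<Rightarrow> real)
    \<Rightarrow> (nat \<Rightarrow> real) \<Rightarrow> (nat \<Rightarrow> real) \<Rightarrow> (nat \<Rightarrow> real) \<Rightarrow> real" where
  "L_fun n p g h w beta lam v =
     (1/2) * (pos_part (sqrt ((vnorm p v)^2 / n * ((vnorm n g)^2 / n) + (vnorm n w)^2 / n
              + 2 * (vnorm p v / sqrt n) * (vinner n g w / n)) - vinner p h v / n))^2
     + J_lam p lam (\<lambda>i. v i + beta i) / n"

definition L_tilde :: "nat \<Rightarrow> nat \<Rightarrow> real \<Rightarrow> (nat \<Rightarrow> real) \<Rightarrow> (nat \<Rightarrow> real)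
    \<Rightarrow> (nat \<Rightarrow> real) \<Rightarrow> (nat \<Rightarrow> real) \<Rightarrow> real" where
  "L_tilde n p sw2 h beta lam v =
     (1/2) * (pos_part (sqrt ((vnorm p v)^2 / n + sw2) - vinner p h v / n))^2
     + J_lam p lam (\<lambda>i. v i + beta i) / n"

definition S_v :: "nat \<Rightarrow> nat \<Rightarrow> real \<Rightarrow> (nat \<Rightarrow> real) set" where
  "S_v n p K = {v. (\<forall>i\<ge>p. v i = 0) \<and> vnorm p v / sqrt n \<le> K}"

end

(*
  The penalty terms of L and L~ coincide, so only the squared positive parts differ. On the
  event where |g|^2/n and g^T w/n are within t of 1 and 0 and |h|^2 <= 2p, the radicands of
  L and L~ differ by at most (K+1)^2 t uniformly on S_v(K); hence the square roots differ by
  O(sqrt t), and since h^T v/n stays bounded by Cauchy-Schwarz, so do the halved squared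
  positive parts. By Chebyshev's inequality (the Gaussian fourth moment gives the variance
  of |g|^2) this event fails with probability O(1/(n t^2) + 1/p), which tends to 0.
*)
theory Submission
  imports Defs
begin

lemma (in prob_space) std_normal_rv_moment:
  assumes X: "distributed M lborel X std_normal_density"
  shows "integrable M (\<lambda>x. X x ^ k)"
    and "expectation (\<lambda>x. X x ^ k) = (\<integral>x. std_normal_density x * x ^ k \<partial>lborel)"
  using distributed_integrable[OF X, of "\<lambda>x. x ^ k"] integrable_std_normal_moment[of k]
    distributed_integral[OF X, of "\<lambda>x. x ^ k"] by simp_all

lemma (in prob_space) std_normal_rv_low_moments:
  assumes X: "distributed M lborel X std_normal_density"
  shows "integrable M X" "integrable M (\<lambda>x. (X x)^2)" "integrable M (\<lambda>x. (X x)^4)"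
    "expectation X = 0" "expectation (\<lambda>x. (X x)^2) = 1" "expectation (\<lambda>x. (X x)^4) = 3"
proof -
  show "integrable M X" "integrable M (\<lambda>x. (X x)^2)" "integrable M (\<lambda>x. (X x)^4)"
    using std_normal_rv_moment(1)[OF X, of 1] std_normal_rv_moment(1)[OF X, of 2]
      std_normal_rv_moment(1)[OF X, of 4] by simp_all
  show "expectation X = 0"
    using std_normal_rv_moment(2)[OF X, of 1] integral_std_normal_moment_odd[of 0] by simp
  show "expectation (\<lambda>x. (X x)^2) = 1"
    using std_normal_rv_moment(2)[OF X, of 2] integral_std_normal_moment_even[of 1] by simp
  have "expectation (\<lambda>x. (X x)^4) = fact (2 * 2) / (2^2 * fact 2)"
    using std_normal_rv_moment(2)[OF X, of 4] integral_std_normal_moment_even[of 2] by simp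
  then show "expectation (\<lambda>x. (X x)^4) = 3"
    by (simp add: fact_numeral)
qed

lemma (in prob_space) second_moment_sum_indep_centered:
  fixes Y :: "nat \<Rightarrow> 'a \<Rightarrow> real"
  assumes fin: "finite I" and ind: "indep_vars (\<lambda>_. borel) Y I"
    and sq: "\<And>i. i \<in> I \<Longrightarrow> integrable M (\<lambda>x. (Y i x)^2)"
    and centered: "\<And>i. i \<in> I \<Longrightarrow> expectation (Y i) = 0"
  shows "integrable M (\<lambda>x. (\<Sum>i\<in>I. Y i x)^2)"
    and "expectation (\<lambda>x. (\<Sum>i\<in>I. Y i x)^2) = (\<Sum>i\<in>I. expectation (\<lambda>x. (Y i x)^2))"
proof -
  have int: "integrable M (Y i)" if "i \<in> I" for i
    using ind sq[OF that] that square_integrable_imp_integrable unfolding indep_vars_def by blast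
  have product: "integrable M (\<lambda>x. Y i x * Y j x) \<and>
     expectation (\<lambda>x. Y i x * Y j x) = (if i = j then expectation (\<lambda>x. (Y i x)^2) else 0)"
    if ij: "i \<in> I" "j \<in> I" for i j
  proof (cases "i = j")
    case True
    then show ?thesis using sq[OF ij(1)] by (simp add: power2_eq_square)
  next
    case False
    have ind2: "indep_vars (\<lambda>_. borel) Y {i, j}"
      using indep_vars_subset[OF ind] ij by auto
    have "integrable M (\<lambda>x. \<Prod>k\<in>{i,j}. Y k x)"
      by (rule indep_vars_integrable[OF _ ind2]) (use int ij in auto)
    moreover have "expectation (\<lambda>x. \<Prod>k\<in>{i,j}. Y k x) = (\<Prod>k\<in>{i,j}. expectation (Y k))"
      by (rule indep_vars_lebesgue_integral[OF _ ind2]) (use int ij in auto)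
    ultimately show ?thesis using False centered ij by simp
  qed
  have expand: "(\<lambda>x. (\<Sum>i\<in>I. Y i x)^2) = (\<lambda>x. \<Sum>i\<in>I. \<Sum>j\<in>I. Y i x * Y j x)"
    by (simp add: power2_eq_square sum_product)
  show "integrable M (\<lambda>x. (\<Sum>i\<in>I. Y i x)^2)"
    unfolding expand using product by (intro Bochner_Integration.integrable_sum) auto
  have "expectation (\<lambda>x. (\<Sum>i\<in>I. Y i x)^2) = (\<Sum>i\<in>I. \<Sum>j\<in>I. expectation (\<lambda>x. Y i x * Y j x))"
    unfolding expand using product
    by (simp add: Bochner_Integration.integral_sum Bochner_Integration.integrable_sum)
  also have "\<dots> = (\<Sum>i\<in>I. \<Sum>j\<in>I. (if i = j then expectation (\<lambda>x. (Y i x)^2) else 0))"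
    using product by (intro sum.cong refl) auto
  also have "\<dots> = (\<Sum>i\<in>I. expectation (\<lambda>x. (Y i x)^2))"
    using fin by simp
  finally show "expectation (\<lambda>x. (\<Sum>i\<in>I. Y i x)^2) = (\<Sum>i\<in>I. expectation (\<lambda>x. (Y i x)^2))" .
qed

lemma (in prob_space) Chebyshev_sum_indep_centered:
  fixes Y :: "nat \<Rightarrow> 'a \<Rightarrow> real"
  assumes fin: "finite I" and ind: "indep_vars (\<lambda>_. borel) Y I"
    and sq: "\<And>i. i \<in> I \<Longrightarrow> integrable M (\<lambda>x. (Y i x)^2)"
    and centered: "\<And>i. i \<in> I \<Longrightarrow> expectation (Y i) = 0"
    and a: "a > 0"
  shows "prob {x\<in>space M. a \<le> \<bar>\<Sum>i\<in>I. Y i x\<bar>} \<le> (\<Sum>i\<in>I. expectation (\<lambda>x. (Y i x)^2)) / a^2"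
proof -
  have rv: "Y i \<in> borel_measurable M" if "i \<in> I" for i
    using ind that unfolding indep_vars_def by auto
  have "integrable M (Y i)" if "i \<in> I" for i
    using rv sq that square_integrable_imp_integrable by blast
  then have "expectation (\<lambda>x. \<Sum>i\<in>I. Y i x) = 0"
    using centered by (simp add: Bochner_Integration.integral_sum)
  then show ?thesis
    using Chebyshev_inequality[OF _ second_moment_sum_indep_centered(1)[OF fin ind sq centered] a]
      second_moment_sum_indep_centered(2)[OF fin ind sq centered] rv
    by simp
qed

lemma std_gaussian_vector_coordinate:
  assumes "std_gaussian_vector M m X" "i < m"
  shows "distributed M lborel (\<lambda>\<omega>. X \<omega> i) std_normal_density"
    and "(\<lambda>\<omega>. X \<omega> i) \<in> borel_measurable M"
  using assms distributed_measurable unfolding std_gaussian_vector_def by fastforce+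

lemma (in prob_space) std_gaussian_vector_sq_norm_deviation:
  assumes X: "std_gaussian_vector M m X" and a: "a > 0"
  shows "prob {\<omega>\<in>space M. a \<le> \<bar>(\<Sum>i<m. (X \<omega> i)^2) - real m\<bar>} \<le> 2 * real m / a^2"
proof -
  define Y where "Y i = (\<lambda>\<omega>. (X \<omega> i)^2 - 1)" for i
  have ind: "indep_vars (\<lambda>_. borel) Y {..<m}"
    using X unfolding Y_def std_gaussian_vector_def
    by (intro indep_vars_compose2[where Y="\<lambda>i z. z^2 - 1"]) auto
  have Y_sq: "(\<lambda>\<omega>. (Y i \<omega>)^2) = (\<lambda>\<omega>. (X \<omega> i)^4 - 2 * (X \<omega> i)^2 + 1)" for i
    unfolding Y_def by (auto simp: power2_eq_square power4_eq_xxxx algebra_simps)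
  have moments: "integrable M (\<lambda>\<omega>. (Y i \<omega>)^2) \<and> expectation (\<lambda>\<omega>. (Y i \<omega>)^2) = 2
      \<and> expectation (Y i) = 0" if "i < m" for i
    using std_normal_rv_low_moments[OF std_gaussian_vector_coordinate(1)[OF X that]]
    unfolding Y_sq by (simp add: Y_def prob_space)
  have "prob {\<omega>\<in>space M. a \<le> \<bar>\<Sum>i<m. Y i \<omega>\<bar>} \<le> (\<Sum>i<m. expectation (\<lambda>\<omega>. (Y i \<omega>)^2)) / a^2"
    by (rule Chebyshev_sum_indep_centered[OF _ ind _ _ a]) (use moments in auto)
  moreover have "(\<Sum>i<m. Y i \<omega>) = (\<Sum>i<m. (X \<omega> i)^2) - real m" for \<omega>
    unfolding Y_def by (simp add: sum_subtractf)
  ultimately show ?thesis using moments by (simp add: mult.commute)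
qed

lemma (in prob_space) std_gaussian_vector_inner_deviation:
  assumes X: "std_gaussian_vector M m X" and a: "a > 0"
  shows "prob {\<omega>\<in>space M. a \<le> \<bar>\<Sum>i<m. X \<omega> i * w i\<bar>} \<le> (\<Sum>i<m. (w i)^2) / a^2"
proof -
  define Y where "Y i = (\<lambda>\<omega>. X \<omega> i * w i)" for i
  have ind: "indep_vars (\<lambda>_. borel) Y {..<m}"
    using X unfolding Y_def std_gaussian_vector_def
    by (intro indep_vars_compose2[where Y="\<lambda>i z. z * w i"]) auto
  have Y_sq: "(\<lambda>\<omega>. (Y i \<omega>)^2) = (\<lambda>\<omega>. (w i)^2 * (X \<omega> i)^2)" for i
    unfolding Y_def by (auto simp: power2_eq_square)
  have moments: "integrable M (\<lambda>\<omega>. (Y i \<omega>)^2) \<and> expectation (\<lambda>\<omega>. (Y i \<omega>)^2) = (w i)^2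
      \<and> expectation (Y i) = 0" if "i < m" for i
    using std_normal_rv_low_moments[OF std_gaussian_vector_coordinate(1)[OF X that]]
    unfolding Y_sq by (simp add: Y_def)
  have "prob {\<omega>\<in>space M. a \<le> \<bar>\<Sum>i<m. Y i \<omega>\<bar>} \<le> (\<Sum>i<m. expectation (\<lambda>\<omega>. (Y i \<omega>)^2)) / a^2"
    by (rule Chebyshev_sum_indep_centered[OF _ ind _ _ a]) (use moments in auto)
  then show ?thesis using moments unfolding Y_def by simp
qed

lemma vnorm_sq: "(vnorm m v)^2 = (\<Sum>i<m. (v i)^2)"
  unfolding vnorm_def by (simp add: sum_nonneg)

lemma (in prob_space) std_gaussian_vectors_typical:
  fixes w :: "nat \<Rightarrow> real"
  assumes g: "std_gaussian_vector M m g" and h: "std_gaussian_vector M p h"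
    and m: "m > 0" and p: "p > 0" and t: "t > 0"
  defines "E \<equiv> {\<omega>\<in>space M. \<bar>(\<Sum>i<m. (g \<omega> i)^2) - real m\<bar> < real m * t \<and>
      \<bar>\<Sum>i<m. g \<omega> i * w i\<bar> < real m * t \<and> \<bar>(\<Sum>i<p. (h \<omega> i)^2) - real p\<bar> < real p}"
  shows "E \<in> events"
    and "prob E \<ge> 1 - (2 / (m * t^2) + (vnorm m w)^2 / (m * t)^2 + 2 / p)"
proof -
  note [measurable] = std_gaussian_vector_coordinate(2)[OF g] std_gaussian_vector_coordinate(2)[OF h]
  define B1 where "B1 = {\<omega>\<in>space M. real m * t \<le> \<bar>(\<Sum>i<m. (g \<omega> i)^2) - real m\<bar>}"
  define B2 where "B2 = {\<omega>\<in>space M. real m * t \<le> \<bar>\<Sum>i<m. g \<omega> i * w i\<bar>}"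
  define B3 where "B3 = {\<omega>\<in>space M. real p \<le> \<bar>(\<Sum>i<p. (h \<omega> i)^2) - real p\<bar>}"
  have [measurable]: "E \<in> events" "B1 \<in> events" "B2 \<in> events" "B3 \<in> events"
    unfolding E_def B1_def B2_def B3_def by measurable
  then show "E \<in> events" by simp
  have mt: "real m * t > 0" using m t by simp
  have "prob B1 \<le> 2 / (m * t^2)"
    using std_gaussian_vector_sq_norm_deviation[OF g mt] m
    unfolding B1_def by (simp add: power2_eq_square mult_ac)
  moreover have "prob B2 \<le> (vnorm m w)^2 / (m * t)^2"
    using std_gaussian_vector_inner_deviation[OF g mt] unfolding B2_def vnorm_sq .
  moreover have "prob B3 \<le> 2 / p"
    using std_gaussian_vector_sq_norm_deviation[OF h, of "real p"] p
    unfolding B3_def by (simp add: power2_eq_square)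
  moreover have "prob (space M - E) \<le> prob B1 + prob B2 + prob B3"
  proof -
    have "prob (space M - E) \<le> prob (B1 \<union> B2 \<union> B3)"
      unfolding E_def B1_def B2_def B3_def by (intro finite_measure_mono) auto
    also have "\<dots> \<le> prob (B1 \<union> B2) + prob B3" by (rule measure_Un_le) auto
    also have "\<dots> \<le> prob B1 + prob B2 + prob B3" using measure_Un_le[of B1 M B2] by simp
    finally show ?thesis .
  qed
  ultimately show "prob E \<ge> 1 - (2 / (m * t^2) + (vnorm m w)^2 / (m * t)^2 + 2 / p)"
    using prob_compl[OF \<open>E \<in> events\<close>] by linarith
qed

(* The factor 2 is needed for negative x, where sqrt x = - sqrt (- x). *)
lemma abs_sqrt_diff_le:
  fixes x y :: real
  assumes "0 \<le> y"
  shows "\<bar>sqrt x - sqrt y\<bar> \<le> 2 * sqrt \<bar>x - y\<bar>"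
proof (cases "x \<ge> 0")
  case True
  have sub: "sqrt a - sqrt b \<le> sqrt (a - b)" if "0 \<le> b" "b \<le> a" for a b :: real
  proof -
    have "(sqrt b + sqrt (a - b))^2 = a + 2 * sqrt b * sqrt (a - b)"
      using that by (simp add: power2_sum)
    then have "sqrt a \<le> sqrt b + sqrt (a - b)"
      using that by (intro real_le_lsqrt) auto
    then show ?thesis by simp
  qed
  have "\<bar>sqrt x - sqrt y\<bar> \<le> sqrt \<bar>x - y\<bar>"
    using sub[of y x] sub[of x y] True assms by (cases "y \<le> x") (auto simp: abs_minus_commute)
  then show ?thesis
    using real_sqrt_ge_zero[of "\<bar>x - y\<bar>"] by linarith
next
  case False
  then have "\<bar>sqrt x - sqrt y\<bar> = sqrt (- x) + sqrt y"
    using assms by (simp add: real_sqrt_minus)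
  also have "\<dots> \<le> sqrt \<bar>x - y\<bar> + sqrt \<bar>x - y\<bar>"
    using False assms by (intro add_mono real_sqrt_le_mono) auto
  finally show ?thesis by simp
qed

lemma abs_diff_half_sq_pos_part_le:
  fixes x y D R :: real
  assumes xy: "\<bar>x - y\<bar> \<le> D" and yR: "y \<le> R" and R: "0 \<le> R"
  shows "\<bar>(1/2) * (pos_part x)^2 - (1/2) * (pos_part y)^2\<bar> \<le> D * (R + D / 2)"
proof -
  define P Q where "P = pos_part x" and "Q = pos_part y"
  have PQ: "0 \<le> P" "0 \<le> Q" "Q \<le> R" "\<bar>P - Q\<bar> \<le> D"
    using xy yR R unfolding P_def Q_def pos_part_def by auto
  have factor: "(1/2) * P^2 - (1/2) * Q^2 = (1/2) * ((P - Q) * (P + Q))"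
    by (simp add: power2_eq_square algebra_simps)
  have "\<bar>(1/2) * P^2 - (1/2) * Q^2\<bar> = (1/2) * (\<bar>P - Q\<bar> * (P + Q))"
    unfolding factor abs_mult using PQ by simp
  also have "\<dots> \<le> (1/2) * (D * (2 * R + D))"
    using PQ by (intro mult_left_mono mult_mono) auto
  finally show ?thesis unfolding P_def Q_def by (simp add: algebra_simps)
qed

lemma abs_vinner_le: "\<bar>vinner m u v\<bar> \<le> vnorm m u * vnorm m v"
proof -
  have "(vinner m u v)^2 \<le> (\<Sum>i<m. (u i)^2) * (\<Sum>i<m. (v i)^2)"
    unfolding vinner_def by (rule Cauchy_Schwarz_ineq_sum)
  then show ?thesis
    unfolding vnorm_def using real_sqrt_le_mono by (fastforce simp: real_sqrt_mult)
qed

lemma abs_sqrt_radicand_perturbation_le: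
  fixes u a b s \<sigma>w K t :: real
  assumes u: "0 \<le> u" "u \<le> K" and a: "\<bar>a - 1\<bar> \<le> t" and b: "\<bar>b\<bar> \<le> t"
    and s: "\<bar>s - \<sigma>w^2\<bar> \<le> t"
  shows "\<bar>sqrt (u^2 * a + s + 2 * u * b) - sqrt (u^2 + \<sigma>w^2)\<bar> \<le> 2 * ((K + 1) * sqrt t)"
proof -
  have t: "0 \<le> t" using s by linarith
  have "\<bar>(u^2 * a + s + 2 * u * b) - (u^2 + \<sigma>w^2)\<bar> = \<bar>u^2 * (a - 1) + (s - \<sigma>w^2) + 2 * u * b\<bar>"
    by (simp add: algebra_simps)
  also have "\<dots> \<le> u^2 * \<bar>a - 1\<bar> + \<bar>s - \<sigma>w^2\<bar> + 2 * u * \<bar>b\<bar>"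
    using u by (simp add: abs_mult order_trans[OF abs_triangle_ineq])
  also have "\<dots> \<le> K^2 * t + t + 2 * K * t"
    using u a b s t by (intro add_mono mult_mono power_mono) auto
  also have "\<dots> = ((K + 1) * sqrt t)^2"
    using t by (simp add: power2_eq_square algebra_simps)
  finally have "sqrt \<bar>(u^2 * a + s + 2 * u * b) - (u^2 + \<sigma>w^2)\<bar> \<le> sqrt (((K + 1) * sqrt t)^2)"
    by (rule real_sqrt_le_mono)
  also have "\<dots> = (K + 1) * sqrt t"
    using u t by simp
  finally show ?thesis
    using abs_sqrt_diff_le[of "u^2 + \<sigma>w^2" "u^2 * a + s + 2 * u * b"] by simp
qed

lemma abs_vinner_S_v_le:
  assumes h_norm: "(\<Sum>i<p. (h i)^2) \<le> 2 * real p" and pn: "real p / real n \<le> 2 / \<delta>"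
    and n: "n > 0" and \<delta>: "\<delta> > 0" and v: "v \<in> S_v n p K"
  shows "\<bar>vinner p h v / n\<bar> \<le> K * sqrt (4 / \<delta>)"
proof -
  have "\<bar>vinner p h v / n\<bar> \<le> vnorm p h * vnorm p v / n"
    using abs_vinner_le[of p h v] by (simp add: divide_right_mono)
  also have "\<dots> = sqrt ((\<Sum>i<p. (h i)^2) / n) * (vnorm p v / sqrt n)"
    unfolding vnorm_def using n by (simp add: real_sqrt_divide field_simps)
  also have "\<dots> \<le> sqrt (4 / \<delta>) * K"
  proof (intro mult_mono real_sqrt_le_mono)
    have "(\<Sum>i<p. (h i)^2) / n \<le> 2 * (real p / n)"
      using h_norm n by (simp add: divide_right_mono)
    then show "(\<Sum>i<p. (h i)^2) / n \<le> 4 / \<delta>" using pn by simp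
  qed (use v \<delta> in \<open>auto simp: S_v_def vnorm_def sum_nonneg\<close>)
  finally show ?thesis by (simp add: mult.commute)
qed

lemma L_fun_L_tilde_gap_le:
  fixes n p :: nat and g h w beta lam v :: "nat \<Rightarrow> real" and t \<sigma>w \<delta> K :: real
  assumes n: "n > 0" and g_norm: "\<bar>(\<Sum>i<n. (g i)^2) - real n\<bar> \<le> real n * t"
    and gw: "\<bar>\<Sum>i<n. g i * w i\<bar> \<le> real n * t"
    and w_norm: "\<bar>(vnorm n w)^2 / n - \<sigma>w^2\<bar> \<le> t"
    and h_norm: "(\<Sum>i<p. (h i)^2) \<le> 2 * real p" and pn: "real p / real n \<le> 2 / \<delta>"
    and \<delta>: "\<delta> > 0" and v: "v \<in> S_v n p K"
  shows "\<bar>L_fun n p g h w beta lam v - L_tilde n p (\<sigma>w^2) h beta lam v\<bar>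
     \<le> 2 * (K + 1) * sqrt t * (sqrt (K^2 + \<sigma>w^2) + K * sqrt (4 / \<delta>) + (K + 1) * sqrt t)"
proof -
  define u where "u = vnorm p v / sqrt n"
  define a where "a = (\<Sum>i<n. (g i)^2) / n"
  define b where "b = vinner n g w / n"
  define q where "q = vinner p h v / n"
  define s where "s = (vnorm n w)^2 / n"
  define R where "R = sqrt (K^2 + \<sigma>w^2) + K * sqrt (4 / \<delta>)"
  have u: "0 \<le> u" "u \<le> K"
    using v unfolding S_v_def u_def vnorm_def by (auto simp: sum_nonneg)
  have "\<bar>a - 1\<bar> = \<bar>(\<Sum>i<n. (g i)^2) - real n\<bar> / n"
    unfolding a_def using n by (simp add: field_simps)
  also have "\<dots> \<le> real n * t / n"
    using g_norm by (intro divide_right_mono) auto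
  finally have a: "\<bar>a - 1\<bar> \<le> t" using n by simp
  have b: "\<bar>b\<bar> \<le> t"
    using gw n unfolding b_def vinner_def by (simp add: field_simps)
  have q: "\<bar>q\<bar> \<le> K * sqrt (4 / \<delta>)"
    unfolding q_def by (rule abs_vinner_S_v_le[OF h_norm pn n \<delta> v])
  have sqrt_gap: "\<bar>(sqrt (u^2 * a + s + 2 * u * b) - q) - (sqrt (u^2 + \<sigma>w^2) - q)\<bar>
      \<le> 2 * ((K + 1) * sqrt t)"
    using abs_sqrt_radicand_perturbation_le[OF u a b] w_norm unfolding s_def by simp
  have "sqrt (u^2 + \<sigma>w^2) \<le> sqrt (K^2 + \<sigma>w^2)"
    using u by (simp add: power_mono)
  then have R_bound: "sqrt (u^2 + \<sigma>w^2) - q \<le> R"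
    using q unfolding R_def by linarith
  have R: "0 \<le> R"
    unfolding R_def using u \<delta> by (intro add_nonneg_nonneg mult_nonneg_nonneg) auto
  have u2: "u^2 = (vnorm p v)^2 / n"
    unfolding u_def by (simp add: power_divide)
  have "L_fun n p g h w beta lam v - L_tilde n p (\<sigma>w^2) h beta lam v =
     (1/2) * (pos_part (sqrt (u^2 * a + s + 2 * u * b) - q))^2
     - (1/2) * (pos_part (sqrt (u^2 + \<sigma>w^2) - q))^2"
    unfolding L_fun_def L_tilde_def u2 a_def b_def q_def s_def vnorm_sq[of n g]
    by (simp add: u_def)
  then have "\<bar>L_fun n p g h w beta lam v - L_tilde n p (\<sigma>w^2) h beta lam v\<bar>
      \<le> 2 * ((K + 1) * sqrt t) * (R + 2 * ((K + 1) * sqrt t) / 2)"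
    using abs_diff_half_sq_pos_part_le[OF sqrt_gap R_bound R] by simp
  also have "\<dots> = 2 * (K + 1) * sqrt t * (sqrt (K^2 + \<sigma>w^2) + K * sqrt (4 / \<delta>) + (K + 1) * sqrt t)"
    unfolding R_def by (simp add: algebra_simps)
  finally show ?thesis .
qed

lemma (in prob_space) L_gap_sup_le_whp:
  fixes w beta lam :: "nat \<Rightarrow> real"
  assumes g: "std_gaussian_vector M n g" and h: "std_gaussian_vector M p h"
    and n: "n > 0" and p: "p > 0" and t: "t > 0"
    and pn: "real p / real n \<le> 2 / \<delta>" and \<delta>: "\<delta> > 0"
    and w_norm: "\<bar>(vnorm n w)^2 / n - \<sigma>w^2\<bar> \<le> t" and K: "0 \<le> K"
  shows "\<exists>A\<in>events. prob A \<ge> 1 - (2 / (n * t^2) + (vnorm n w)^2 / (n * t)^2 + 2 / p) \<and>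
     (\<forall>\<omega>\<in>A. (SUP v\<in>S_v n p K.
        \<bar>L_fun n p (g \<omega>) (h \<omega>) w beta lam v - L_tilde n p (\<sigma>w^2) (h \<omega>) beta lam v\<bar>)
      \<le> 2 * (K + 1) * sqrt t * (sqrt (K^2 + \<sigma>w^2) + K * sqrt (4 / \<delta>) + (K + 1) * sqrt t))"
proof -
  define E where "E = {\<omega>\<in>space M. \<bar>(\<Sum>i<n. (g \<omega> i)^2) - real n\<bar> < real n * t \<and>
      \<bar>\<Sum>i<n. g \<omega> i * w i\<bar> < real n * t \<and> \<bar>(\<Sum>i<p. (h \<omega> i)^2) - real p\<bar> < real p}"
  have "(\<lambda>_. 0) \<in> S_v n p K"
    unfolding S_v_def vnorm_def using K by simp
  then have "(SUP v\<in>S_v n p K.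
        \<bar>L_fun n p (g \<omega>) (h \<omega>) w beta lam v - L_tilde n p (\<sigma>w^2) (h \<omega>) beta lam v\<bar>)
      \<le> 2 * (K + 1) * sqrt t * (sqrt (K^2 + \<sigma>w^2) + K * sqrt (4 / \<delta>) + (K + 1) * sqrt t)"
    if "\<omega> \<in> E" for \<omega>
    using that unfolding E_def
    by (intro cSUP_least L_fun_L_tilde_gap_le[OF n _ _ w_norm _ pn \<delta>]) auto
  moreover have "E \<in> events" "prob E \<ge> 1 - (2 / (n * t^2) + (vnorm n w)^2 / (n * t)^2 + 2 / p)"
    using std_gaussian_vectors_typical[OF g h n p t, of w] unfolding E_def by auto
  ultimately show ?thesis by blast
qed

lemma inverse_tendsto_0_of_ratio_tendsto:
  fixes n :: "nat \<Rightarrow> nat"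
  assumes ratio: "(\<lambda>p. real (n p) / real p) \<longlonglongrightarrow> \<delta>" and \<delta>: "\<delta> > 0"
  shows "(\<lambda>p. 1 / real (n p)) \<longlonglongrightarrow> 0"
proof -
  have "(\<lambda>p. (1 / real p) * (real p / real (n p))) \<longlonglongrightarrow> 0 * inverse \<delta>"
    using tendsto_inverse[OF ratio] \<delta> by (intro tendsto_mult lim_1_over_n) simp_all
  moreover have "\<forall>\<^sub>F p in sequentially. (1 / real p) * (real p / real (n p)) = 1 / real (n p)"
    using eventually_gt_at_top[of 0] by eventually_elim auto
  ultimately show ?thesis
    by (simp add: Lim_transform_eventually)
qed

lemma eventually_dimension_ratio_bounded:
  fixes n :: "nat \<Rightarrow> nat"
  assumes ratio: "(\<lambda>p. real (n p) / real p) \<longlonglongrightarrow> \<delta>" and \<delta>: "\<delta> > 0"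
  shows "\<forall>\<^sub>F p in sequentially. 0 < n p \<and> 0 < p \<and> real p / real (n p) \<le> 2 / \<delta>"
proof -
  have "\<delta> / 2 < \<delta>" using \<delta> by simp
  from order_tendstoD(1)[OF ratio this] eventually_gt_at_top[of 0]
  show ?thesis
  proof eventually_elim
    case (elim p)
    then have "0 < n p" using \<delta> by (cases "n p") auto
    with elim \<delta> show ?case
      by (auto simp: field_simps)
  qed
qed

lemma failure_bound_tendsto_0:
  fixes n :: "nat \<Rightarrow> nat" and w :: "nat \<Rightarrow> nat \<Rightarrow> real" and t :: real
  assumes ratio: "(\<lambda>p. real (n p) / real p) \<longlonglongrightarrow> \<delta>" and \<delta>: "\<delta> > 0"
    and w_norm: "(\<lambda>p. (vnorm (n p) (w p))^2 / real (n p)) \<longlonglongrightarrow> \<sigma>2" and t: "t \<noteq> 0"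
  shows "(\<lambda>p. 2 / (n p * t^2) + (vnorm (n p) (w p))^2 / (n p * t)^2 + 2 / p) \<longlonglongrightarrow> 0"
proof -
  have "(\<lambda>p. (2 + (vnorm (n p) (w p))^2 / real (n p)) / t^2 * (1 / real (n p)) + 2 * (1 / real p))
      \<longlonglongrightarrow> (2 + \<sigma>2) / t^2 * 0 + 2 * 0"
    using t by (intro tendsto_intros w_norm inverse_tendsto_0_of_ratio_tendsto[OF ratio \<delta>] lim_1_over_n) auto
  moreover have "(2 + (vnorm (n p) (w p))^2 / real (n p)) / t^2 * (1 / real (n p)) + 2 * (1 / real p)
      = 2 / (n p * t^2) + (vnorm (n p) (w p))^2 / (n p * t)^2 + 2 / p" for p
    using t by (cases "n p = 0") (simp_all add: power2_eq_square field_simps)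
  ultimately show ?thesis by simp
qed

lemma exists_pos_sqrt_bound_less:
  fixes a b \<epsilon> :: real
  assumes "\<epsilon> > 0"
  shows "\<exists>t>0. a * sqrt t * (b + a * sqrt t) < \<epsilon>"
proof -
  have "((\<lambda>t. a * sqrt t * (b + a * sqrt t)) \<longlongrightarrow> a * sqrt 0 * (b + a * sqrt 0)) (at_right 0)"
    by (intro tendsto_intros tendsto_ident_at)
  then have "\<forall>\<^sub>F t in at_right 0. a * sqrt t * (b + a * sqrt t) < \<epsilon>"
    using assms by (intro order_tendstoD(2)) auto
  then obtain c where "c > 0" "\<forall>t>0. t < c \<longrightarrow> a * sqrt t * (b + a * sqrt t) < \<epsilon>"
    unfolding eventually_at_right_field by auto
  then show ?thesis
    by (intro exI[of _ "c / 2"]) auto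
qed

lemma L_gap_sup_small_whp:
  fixes M :: "nat \<Rightarrow> 'a measure" and n :: "nat \<Rightarrow> nat"
    and g h :: "nat \<Rightarrow> 'a \<Rightarrow> nat \<Rightarrow> real" and w beta lam :: "nat \<Rightarrow> nat \<Rightarrow> real"
  assumes \<delta>: "\<delta> > 0" and ratio: "(\<lambda>p. real (n p) / real p) \<longlonglongrightarrow> \<delta>"
    and M: "\<And>p. prob_space (M p)"
    and g: "\<And>p. std_gaussian_vector (M p) (n p) (g p)"
    and h: "\<And>p. std_gaussian_vector (M p) p (h p)"
    and w_norm: "(\<lambda>p. (vnorm (n p) (w p))^2 / real (n p)) \<longlonglongrightarrow> \<sigma>w^2"
    and K: "0 \<le> K" and \<epsilon>: "\<epsilon> > 0"
  shows "\<exists>d. d \<longlonglongrightarrow> 0 \<and>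
      (\<forall>p. \<exists>A \<in> sets (M p). measure (M p) A \<ge> 1 - d p \<and>
         (\<forall>\<omega>\<in>A. (SUP v\<in>S_v (n p) p K.
             \<bar>L_fun (n p) p (g p \<omega>) (h p \<omega>) (w p) (beta p) (lam p) v
              - L_tilde (n p) p (\<sigma>w^2) (h p \<omega>) (beta p) (lam p) v\<bar>) < \<epsilon>))"
proof -
  define R where "R = sqrt (K^2 + \<sigma>w^2) + K * sqrt (4 / \<delta>)"
  obtain t where t: "t > 0" "(K + 1) * sqrt t * (R + (K + 1) * sqrt t) < \<epsilon> / 2"
    using exists_pos_sqrt_bound_less[of "\<epsilon> / 2"] \<epsilon> by auto
  have "\<forall>\<^sub>F p in sequentially. (0 < n p \<and> 0 < p \<and> real p / real (n p) \<le> 2 / \<delta>) \<and>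
      \<bar>(vnorm (n p) (w p))^2 / real (n p) - \<sigma>w^2\<bar> < t"
    using eventually_dimension_ratio_bounded[OF ratio \<delta>] tendstoD[OF w_norm t(1)]
    by (simp add: dist_real_def eventually_conj_iff)
  then obtain N where N: "\<And>p. p \<ge> N \<Longrightarrow> (0 < n p \<and> 0 < p \<and> real p / real (n p) \<le> 2 / \<delta>) \<and>
      \<bar>(vnorm (n p) (w p))^2 / real (n p) - \<sigma>w^2\<bar> < t"
    unfolding eventually_sequentially by blast
  define d where "d p = (if p < N then 1
      else 2 / (n p * t^2) + (vnorm (n p) (w p))^2 / (n p * t)^2 + 2 / p)" for p
  have "t \<noteq> 0" using t(1) by simp
  have "d \<longlonglongrightarrow> 0"
    by (rule Lim_transform_eventually[OF failure_bound_tendsto_0[OF ratio \<delta> w_norm \<open>t \<noteq> 0\<close>]])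
      (auto simp: d_def eventually_sequentially intro: exI[of _ N])
  moreover have "\<exists>A \<in> sets (M p). measure (M p) A \<ge> 1 - d p \<and>
      (\<forall>\<omega>\<in>A. (SUP v\<in>S_v (n p) p K.
          \<bar>L_fun (n p) p (g p \<omega>) (h p \<omega>) (w p) (beta p) (lam p) v
           - L_tilde (n p) p (\<sigma>w^2) (h p \<omega>) (beta p) (lam p) v\<bar>) < \<epsilon>)" for p
  proof (cases "p < N")
    case True
    then show ?thesis by (intro bexI[of _ "{}"]) (auto simp: d_def)
  next
    case False
    interpret prob_space "M p" by (rule M)
    have "2 * (K + 1) * sqrt t * (R + (K + 1) * sqrt t) < \<epsilon>"
      using t(2) by (simp only: mult.assoc)
    with False show ?thesis
      using L_gap_sup_le_whp[where w="w p" and \<sigma>w=\<sigma>w and K=K and beta="beta p"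
          and lam="lam p", OF g h _ _ t(1) _ \<delta>] N[of p] K
      unfolding d_def R_def by (fastforce simp: mult.assoc)
  qed
  ultimately show ?thesis by blast
qed

theorem lemma22:
  fixes M :: "nat \<Rightarrow> 'a measure"
    and n :: "nat \<Rightarrow> nat"
    and \<delta> :: real and \<sigma>w :: real
    and g h :: "nat \<Rightarrow> 'a \<Rightarrow> nat \<Rightarrow> real"
    and w beta lam :: "nat \<Rightarrow> nat \<Rightarrow> real"
    and K :: real
  assumes "\<delta> > 0"
    and "(\<lambda>p. real (n p) / real p) \<longlonglongrightarrow> \<delta>"
    and "\<And>p. prob_space (M p)"
    and "\<And>p. std_gaussian_vector (M p) (n p) (g p)"
    and "\<And>p. std_gaussian_vector (M p) p (h p)"
    and "converging_sequence n w"
    and "(\<lambda>p. (vnorm (n p) (w p))^2 / real (n p)) \<longlonglongrightarrow> \<sigma>w^2"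
    and "\<And>p i j. i \<le> j \<Longrightarrow> j < p \<Longrightarrow> 0 \<le> lam p i \<and> lam p i \<le> lam p j"
    and "K > 0"
  shows "\<exists>c>0. \<forall>\<epsilon>. 0 < \<epsilon> \<and> \<epsilon> < 1/2 \<longrightarrow>
           (\<exists>d :: nat \<Rightarrow> real. d \<longlonglongrightarrow> 0 \<and>
              (\<forall>p. \<exists>A \<in> sets (M p). measure (M p) A \<ge> 1 - d p \<and>
                 (\<forall>\<omega>\<in>A. (SUP v\<in>S_v (n p) p K.
                     \<bar>L_fun (n p) p (g p \<omega>) (h p \<omega>) (w p) (beta p) (lam p) v
                      - L_tilde (n p) p (\<sigma>w^2) (h p \<omega>) (beta p) (lam p) v\<bar>) < c * \<epsilon>)))"
  using L_gap_sup_small_whp[OF assms(1-5,7) less_imp_le[OF assms(9)]]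
  by (intro exI[of _ 1]) simp

end
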